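(* There are absolute constants $C,c>0$ such that the following holds. Let $P$ be a set of $n$ points in $\mathbb{R}^2$ in general position, let $\Pi\subseteq\binom{P}{2}$, let $0<\epsilon\le 1$, $0<\sigma\le 1$, and let $r\ge1$ be an integer. Then every subfamily ${\cal K}\subseteq{\cal K}(P,\Pi,\epsilon,\sigma)$ admits a point transversal (a set of points meeting every member of ${\cal K}$) of cardinality at most $$C\left(r\cdot f_2(c\,\epsilon\,\sigma\, r)+\frac{r^2|\Pi|}{\sigma\,\epsilon^2 n^2}\right).$$
   Context: General position: no three points of $P$ are collinear and no two lie on a common vertical line. $\binom{P}{2}$ denotes the set of all segments (edges) spanned by pairs of points of $P$. A convex set $K$ is $(\epsilon,\sigma)$-restricted to the graph $(P,\Pi)$ if $P\cap K$ contains a subset $P_K$ of exactly $\lceil\epsilon n\rceil$ points such that $\Pi_K:=\binom{P_K}{2}\cap\Pi$ contains at least $\sigma\binom{\lceil \epsilon n\rceil}{2}$ edges. ${\cal K}(P,\Pi,\epsilon,\sigma)$ denotes the family of all convex sets that are $(\epsilon,\sigma)$-restricted to $(P,\Pi)$. $f_2(x)$ denotes the smallest integer $f$ such that every finite point set $P'\subset\mathbb{R}^2$ admits a set of at most $f$ points meeting every convex set $K$ with $|K\cap P'|\ge x|P'|$; by convention $f_2(x)=1$ for $x\ge 1$. *)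

theory Defs
  imports "HOL-Analysis.Analysis"
begin

type_synonym pt = "real \<times> real"

definition general_position :: "pt set \<Rightarrow> bool" where
  "general_position P \<longleftrightarrow>
     (\<forall>p\<in>P. \<forall>q\<in>P. \<forall>s\<in>P. p \<noteq> q \<and> p \<noteq> s \<and> q \<noteq> s \<longrightarrow> \<not> collinear {p, q, s}) \<and>
     (\<forall>p\<in>P. \<forall>q\<in>P. p \<noteq> q \<longrightarrow> fst p \<noteq> fst q)"

definition edges :: "'a set \<Rightarrow> 'a set set" where
  "edges P = {e. \<exists>p\<in>P. \<exists>q\<in>P. p \<noteq> q \<and> e = {p, q}}"

definition restricted :: "pt set \<Rightarrow> pt set set \<Rightarrow> real \<Rightarrow> real \<Rightarrow> pt set \<Rightarrow> bool" where
  "restricted P E eps sg K \<longleftrightarrow> convex K \<and>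
     (\<exists>PK. PK \<subseteq> P \<inter> K \<and> card PK = nat \<lceil>eps * real (card P)\<rceil> \<and>
        real (card (edges PK \<inter> E)) \<ge> sg * real (nat \<lceil>eps * real (card P)\<rceil> choose 2))"

definition restricted_family :: "pt set \<Rightarrow> pt set set \<Rightarrow> real \<Rightarrow> real \<Rightarrow> pt set set" where
  "restricted_family P E eps sg = {K. restricted P E eps sg K}"

definition f2 :: "real \<Rightarrow> nat" where
  "f2 x = (if x \<ge> 1 then 1 else
     (LEAST f. \<forall>P'::pt set. finite P' \<and> P' \<noteq> {} \<longrightarrow>
        (\<exists>T. finite T \<and> card T \<le> f \<and>
           (\<forall>K. convex K \<and> real (card (K \<inter> P')) \<ge> x * real (card P') \<longrightarrow> T \<inter> K \<noteq> {}))))"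

end

theory Submission
  imports Defs
begin

text \<open>Split P by vertical lines into r strips of about n/r points each. A set K of the family
  contains a sample of m = \<lceil>\<epsilon>n\<rceil> points spanning at least \<sigma>m^2/4 edges. If some strip holds
  \<sigma>m/8 of the sample, K contains a c\<epsilon>\<sigma>r-fraction of that strip and is caught by a weak net of
  the strip of size f_2(c\<epsilon>\<sigma>r). Otherwise at least \<sigma>m^2/8 sample edges join different strips,
  so by pigeonhole K contains \<sigma>m^2/(8r) edges leaving a single strip i. All these edges cross the
  vertical line bounding strip i, and a convex set meets that line in a segment; ordering the
  crossing points along the line, every (|E_i|/s)-th of them is a transversal of all convex sets
  containing s of the edges. With s \<approx> \<sigma>\<epsilon>^2n^2/r this costs r|E|/(\<sigma>\<epsilon>^2n^2) points in total.
  That f_2 is finite follows from the same crossing argument applied recursively to halves.\<close>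

definition order_convex_in :: "'a set \<Rightarrow> ('a \<Rightarrow> 'b::linorder) \<Rightarrow> 'a set \<Rightarrow> bool" where
  "order_convex_in F v Q \<longleftrightarrow> (\<forall>a\<in>Q. \<forall>b\<in>Q. \<forall>y\<in>F. v a \<le> v y \<and> v y \<le> v b \<longrightarrow> y \<in> Q)"

lemma order_convex_in_subset:
  "order_convex_in F v Q \<Longrightarrow> F' \<subseteq> F \<Longrightarrow> order_convex_in F' v Q"
  unfolding order_convex_in_def by blast

lemma least_threshold_exists:
  fixes v :: "'a \<Rightarrow> 'b::linorder"
  assumes "finite F" "k \<le> card F" "k > 0"
  obtains a where "a \<in> v ` F" "k \<le> card {f\<in>F. v f \<le> a}"
    "\<And>b. b \<in> v ` F \<Longrightarrow> k \<le> card {f\<in>F. v f \<le> b} \<Longrightarrow> a \<le> b"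
proof -
  define W where "W = {b \<in> v ` F. k \<le> card {f\<in>F. v f \<le> b}}"
  have "F \<noteq> {}" using assms by auto
  moreover have "{f\<in>F. v f \<le> Max (v ` F)} = F" using assms(1) by auto
  ultimately have "Max (v ` F) \<in> W" using assms unfolding W_def by simp
  moreover have "finite W" using assms(1) unfolding W_def by simp
  ultimately show ?thesis using that[of "Min W"] Min_in[of W] Min_le[of W] unfolding W_def by blast
qed

text \<open>Greedy choice: let a be the least value whose down-set has k elements and pick g with v g = a.
  Order-convex sets straddling a contain g, those strictly below a are too small by minimality of a,
  and those strictly above a are handled recursively.\<close>

lemma order_convex_transversal:
  fixes v :: "'a \<Rightarrow> 'b::linorder"
  assumes "finite F" "k > 0"
  shows "\<exists>S\<subseteq>F. card S * k \<le> card F \<and>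
     (\<forall>Q\<subseteq>F. order_convex_in F v Q \<and> k \<le> card Q \<longrightarrow> Q \<inter> S \<noteq> {})"
  using assms(1)
proof (induction "card F" arbitrary: F rule: less_induct)
  case less
  show ?case
  proof (cases "card F < k")
    case True
    have "\<not> k \<le> card Q" if "Q \<subseteq> F" for Q
      using card_mono[OF less.prems that] True by linarith
    then show ?thesis by (intro exI[of _ "{}"]) simp
  next
    case False
    then have "k \<le> card F" by simp
    obtain a where a: "a \<in> v ` F" "k \<le> card {f\<in>F. v f \<le> a}"
      and a_least: "\<And>b. b \<in> v ` F \<Longrightarrow> k \<le> card {f\<in>F. v f \<le> b} \<Longrightarrow> a \<le> b"
      using least_threshold_exists[OF less.prems \<open>k \<le> card F\<close> assms(2), where v = v] by blast
    obtain g where g: "g \<in> F" "v g = a" using a(1) by auto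
    define F' where "F' = {f\<in>F. a < v f}"
    have card_F': "card F' + k \<le> card F"
    proof -
      have "card F' + card {f\<in>F. v f \<le> a} = card F"
      proof -
        have fin: "finite F'" "finite {f\<in>F. v f \<le> a}" using less.prems unfolding F'_def by auto
        have "F' \<union> {f\<in>F. v f \<le> a} = F" "F' \<inter> {f\<in>F. v f \<le> a} = {}" unfolding F'_def by auto
        then show ?thesis using card_Un_disjoint[OF fin] by simp
      qed
      then show ?thesis using a(2) by linarith
    qed
    obtain S' where S': "S' \<subseteq> F'" "card S' * k \<le> card F'"
      "\<forall>Q\<subseteq>F'. order_convex_in F' v Q \<and> k \<le> card Q \<longrightarrow> Q \<inter> S' \<noteq> {}"
    proof -
      have "card F' < card F" "finite F'" using card_F' assms(2) less.prems unfolding F'_def by auto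
      then show thesis using less.hyps[of F'] that by blast
    qed
    show ?thesis
    proof (intro exI[of _ "insert g S'"] conjI allI impI)
      show "insert g S' \<subseteq> F" using g S'(1) unfolding F'_def by auto
      have "card (insert g S') \<le> card S' + 1" by (simp add: card_insert_le_m1)
      from mult_le_mono1[OF this, of k]
      have "card (insert g S') * k \<le> card S' * k + k" by simp
      then show "card (insert g S') * k \<le> card F" using S'(2) card_F' by linarith
      fix Q assume Q: "Q \<subseteq> F" and Qc: "order_convex_in F v Q \<and> k \<le> card Q"
      consider "\<exists>q\<in>Q. v q \<le> a" "\<exists>q\<in>Q. a \<le> v q" | "\<forall>q\<in>Q. a < v q" | "\<forall>q\<in>Q. v q < a"
        by (meson not_le)
      then show "Q \<inter> insert g S' \<noteq> {}"
      proof cases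
        case 1
        then obtain q1 q2 where "q1 \<in> Q" "q2 \<in> Q" "v q1 \<le> v g" "v g \<le> v q2" using g by auto
        then have "g \<in> Q" using Qc g(1) unfolding order_convex_in_def by blast
        then show ?thesis by blast
      next
        case 2
        then have "Q \<subseteq> F'" using Q unfolding F'_def by auto
        moreover have "order_convex_in F' v Q"
          using Qc order_convex_in_subset[of F v Q F'] unfolding F'_def by blast
        ultimately show ?thesis using S'(3) Qc by blast
      next
        case 3
        have "finite Q" using Q less.prems finite_subset by blast
        moreover have "Q \<noteq> {}" using Qc assms(2) by auto
        ultimately have "Max (v ` Q) \<in> v ` Q" by simp
        then have "Max (v ` Q) \<in> v ` F" "Max (v ` Q) < a" using Q 3 by auto
        moreover have "Q \<subseteq> {f\<in>F. v f \<le> Max (v ` Q)}" using Q \<open>finite Q\<close> by auto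
        then have "k \<le> card {f\<in>F. v f \<le> Max (v ` Q)}"
          using Qc less.prems card_mono[of "{f\<in>F. v f \<le> Max (v ` Q)}" Q] by simp
        ultimately show ?thesis using a_least[of "Max (v ` Q)"] by simp
      qed
    qed
  qed
qed

lemma convex_vertical_segment:
  fixes a b c :: pt
  assumes "convex K" "a \<in> K" "b \<in> K" "fst a = fst c" "fst b = fst c"
    "snd a \<le> snd c" "snd c \<le> snd b"
  shows "c \<in> K"
proof (cases "snd a = snd b")
  case True
  then have "snd c = snd a" using assms(6,7) by linarith
  then have "c = a" using assms(4) by (simp add: prod_eq_iff)
  then show ?thesis using assms(2) by simp
next
  case False
  define u where "u = (snd c - snd a) / (snd b - snd a)"
  have "0 \<le> u" "u \<le> 1" using False assms(6,7) unfolding u_def by (auto simp: field_simps)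
  moreover have "u * (snd b - snd a) = snd c - snd a" using False unfolding u_def by simp
  then have "c = (1 - u) *\<^sub>R a + u *\<^sub>R b"
    using assms(4,5) by (simp add: prod_eq_iff algebra_simps)
  ultimately show ?thesis using convexD[OF assms(1-3)] by simp
qed

text \<open>For a pair with
  equal abscissae the quotient is 0/0 = 0, so the crossing is fst f, which is still correct when t is
  that abscissa.\<close>

definition vertical_crossing :: "real \<Rightarrow> pt \<times> pt \<Rightarrow> pt" where
  "vertical_crossing t f =
     fst f + ((t - fst (fst f)) / (fst (snd f) - fst (fst f))) *\<^sub>R (snd f - fst f)"

lemma
  assumes "fst (fst f) \<le> t" "t \<le> fst (snd f)"
  shows fst_vertical_crossing: "fst (vertical_crossing t f) = t"
    and vertical_crossing_in_convex:
      "convex K \<Longrightarrow> fst f \<in> K \<Longrightarrow> snd f \<in> K \<Longrightarrow> vertical_crossing t f \<in> K"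
proof -
  define l where "l = (t - fst (fst f)) / (fst (snd f) - fst (fst f))"
  have l: "0 \<le> l \<and> l \<le> 1"
  proof (cases "fst (fst f) = fst (snd f)")
    case False
    then have "fst (fst f) < fst (snd f)" using assms by linarith
    then show ?thesis using assms by (simp add: l_def divide_le_eq_1)
  qed (simp add: l_def)
  have eq: "vertical_crossing t f = (1 - l) *\<^sub>R fst f + l *\<^sub>R snd f"
    unfolding vertical_crossing_def l_def by (simp add: algebra_simps)
  have "fst (vertical_crossing t f) = fst (fst f) + l * (fst (snd f) - fst (fst f))"
    unfolding vertical_crossing_def l_def by simp
  then show "fst (vertical_crossing t f) = t"
    using assms unfolding l_def by (cases "fst (fst f) = fst (snd f)") auto
  show "vertical_crossing t f \<in> K" if "convex K" "fst f \<in> K" "snd f \<in> K"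
    using convexD[OF that] l eq by simp
qed

text \<open>A convex set meets the line at abscissa t in a segment, so the straddling pairs it contains form
  an order-convex family with respect to the height of their crossing points.\<close>

lemma straddling_pairs_transversal:
  fixes F :: "(pt \<times> pt) set"
  assumes "finite F" "k > 0" and straddle: "\<forall>f\<in>F. fst (fst f) \<le> t \<and> t \<le> fst (snd f)"
  shows "\<exists>T. finite T \<and> card T * k \<le> card F \<and>
     (\<forall>K. convex K \<and> k \<le> card {f\<in>F. fst f \<in> K \<and> snd f \<in> K} \<longrightarrow> T \<inter> K \<noteq> {})"
proof -
  let ?c = "vertical_crossing t"
  obtain S where S: "S \<subseteq> F" "card S * k \<le> card F"
    "\<forall>Q\<subseteq>F. order_convex_in F (\<lambda>f. snd (?c f)) Q \<and> k \<le> card Q \<longrightarrow> Q \<inter> S \<noteq> {}"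
    using order_convex_transversal[OF assms(1,2), where v = "\<lambda>f. snd (?c f)"] by blast
  have "finite S" using S(1) assms(1) finite_subset by blast
  have "?c ` S \<inter> K \<noteq> {}"
    if K: "convex K" "k \<le> card {f\<in>F. fst f \<in> K \<and> snd f \<in> K}" for K
  proof -
    define Q where "Q = {f\<in>F. ?c f \<in> K}"
    have "{f\<in>F. fst f \<in> K \<and> snd f \<in> K} \<subseteq> Q"
    proof
      fix f assume f: "f \<in> {f\<in>F. fst f \<in> K \<and> snd f \<in> K}"
      then have "?c f \<in> K"
        using straddle vertical_crossing_in_convex[where f = f and t = t and K = K] K(1) by simp
      then show "f \<in> Q" using f unfolding Q_def by simp
    qed
    moreover have "finite Q" unfolding Q_def using assms(1) by simp
    ultimately have "k \<le> card Q" using K(2) card_mono[of Q] by (meson le_trans)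
    moreover have "order_convex_in F (\<lambda>f. snd (?c f)) Q"
      unfolding order_convex_in_def
    proof (intro ballI impI)
      fix a b y assume "a \<in> Q" "b \<in> Q" "y \<in> F" and "snd (?c a) \<le> snd (?c y) \<and> snd (?c y) \<le> snd (?c b)"
      moreover have "fst (?c f) = t" if "f \<in> F" for f
        using straddle that fst_vertical_crossing by blast
      moreover have "a \<in> F" "b \<in> F" "?c a \<in> K" "?c b \<in> K" using \<open>a \<in> Q\<close> \<open>b \<in> Q\<close> unfolding Q_def by auto
      ultimately have "?c y \<in> K" using convex_vertical_segment[OF K(1), of "?c a" "?c b" "?c y"] by simp
      then show "y \<in> Q" using \<open>y \<in> F\<close> unfolding Q_def by blast
    qed
    moreover have "Q \<subseteq> F" unfolding Q_def by blast
    ultimately have "Q \<inter> S \<noteq> {}" using S(3) by blast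
    then show ?thesis unfolding Q_def by blast
  qed
  moreover have "card (?c ` S) * k \<le> card F"
    using card_image_le[OF \<open>finite S\<close>, of ?c] S(2) by (meson le_trans mult_le_mono1)
  ultimately show ?thesis using \<open>finite S\<close> by blast
qed

lemma exists_separating_abscissa:
  fixes A :: "pt set"
  assumes "finite A" "\<forall>f\<in>F. fst f \<in> A \<and> (\<forall>a\<in>A. fst a \<le> fst (snd f))"
  shows "\<exists>t. \<forall>f\<in>F. fst (fst f) \<le> t \<and> t \<le> fst (snd f)"
proof (intro exI[of _ "Max (fst ` A)"] ballI conjI)
  fix f assume "f \<in> F"
  then have "fst f \<in> A" "\<forall>a\<in>A. fst a \<le> fst (snd f)" using assms(2) by auto
  moreover from this have "A \<noteq> {}" by blast
  ultimately show "fst (fst f) \<le> Max (fst ` A)" "Max (fst ` A) \<le> fst (snd f)"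
    using assms(1) by (auto simp: Max_le_iff)
qed

lemma bipartite_pairs_transversal:
  fixes L R :: "pt set"
  assumes "finite L" "finite R" "k > 0" and left: "\<forall>p\<in>L. \<forall>q\<in>R. fst p \<le> fst q"
  shows "\<exists>T. finite T \<and> card T * k \<le> card L * card R \<and>
     (\<forall>K. convex K \<and> k \<le> card (K \<inter> L) * card (K \<inter> R) \<longrightarrow> T \<inter> K \<noteq> {})"
proof -
  have "\<forall>f\<in>L \<times> R. fst f \<in> L \<and> (\<forall>a\<in>L. fst a \<le> fst (snd f))" using left by auto
  then obtain t where "\<forall>f\<in>L \<times> R. fst (fst f) \<le> t \<and> t \<le> fst (snd f)"
    using exists_separating_abscissa[OF assms(1)] by blast
  then obtain T where T: "finite T" "card T * k \<le> card (L \<times> R)"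
    "\<forall>K. convex K \<and> k \<le> card {f\<in>L \<times> R. fst f \<in> K \<and> snd f \<in> K} \<longrightarrow> T \<inter> K \<noteq> {}"
    using straddling_pairs_transversal[of "L \<times> R" k t] assms(1-3) by blast
  have "{f\<in>L \<times> R. fst f \<in> K \<and> snd f \<in> K} = (K \<inter> L) \<times> (K \<inter> R)" for K
    by auto
  then show ?thesis using T by (intro exI[of _ T]) (simp add: card_cartesian_product)
qed

definition x_rank :: "pt set \<Rightarrow> pt \<Rightarrow> nat" where
  "x_rank P p = card {q\<in>P. fst q < fst p}"

lemma x_rank_less:
  fixes P :: "pt set"
  assumes "finite P" "p \<in> P" "fst p < fst q"
  shows "x_rank P p < x_rank P q"
proof -
  have "{q'\<in>P. fst q' < fst p} \<subset> {q'\<in>P. fst q' < fst q}"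
    using assms(2,3) by (auto intro: less_trans)
  then show ?thesis unfolding x_rank_def using assms(1) by (simp add: psubset_card_mono)
qed

lemma x_rank_less_imp_fst_less:
  fixes P :: "pt set"
  assumes "finite P" "x_rank P p < x_rank P q"
  shows "fst p < fst q"
proof (rule ccontr)
  assume "\<not> fst p < fst q"
  then have "{q'\<in>P. fst q' < fst q} \<subseteq> {q'\<in>P. fst q' < fst p}" by auto
  then have "x_rank P q \<le> x_rank P p" unfolding x_rank_def using assms(1) by (simp add: card_mono)
  then show False using assms(2) by simp
qed

lemma x_rank_less_card:
  fixes P :: "pt set"
  assumes "finite P" "p \<in> P"
  shows "x_rank P p < card P"
proof -
  have "{q\<in>P. fst q < fst p} \<subset> P" using assms(2) by auto
  then show ?thesis unfolding x_rank_def using assms(1) by (simp add: psubset_card_mono)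
qed

lemma inj_on_x_rank:
  fixes P :: "pt set"
  assumes "finite P" "inj_on fst P"
  shows "inj_on (x_rank P) P"
proof (rule inj_onI)
  fix p q assume pq: "p \<in> P" "q \<in> P" "x_rank P p = x_rank P q"
  then have "\<not> fst p < fst q" "\<not> fst q < fst p" using x_rank_less[OF assms(1)] by fastforce+
  then have "fst p = fst q" by simp
  then show "p = q" using assms(2) pq(1,2) by (simp add: inj_on_eq_iff)
qed

lemma card_x_rank_interval:
  fixes P :: "pt set"
  assumes "finite P" "inj_on fst P"
  shows "card {p\<in>P. a \<le> x_rank P p \<and> x_rank P p < b} \<le> b - a"
proof -
  let ?S = "{p\<in>P. a \<le> x_rank P p \<and> x_rank P p < b}"
  have "inj_on (x_rank P) ?S" by (rule inj_on_subset[OF inj_on_x_rank[OF assms]]) blast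
  moreover have "x_rank P ` ?S \<subseteq> {a..<b}" by auto
  ultimately have "card ?S \<le> card {a..<b}" by (rule card_inj_on_le) simp
  then show ?thesis by simp
qed

lemma x_rank_halves:
  fixes P :: "pt set"
  assumes "finite P" "inj_on fst P" "3 \<le> card P"
  obtains L R where "L \<union> R = P" "L \<inter> R = {}" "2 * card L \<le> card P" "3 * card R \<le> 2 * card P"
    "\<forall>p\<in>L. \<forall>q\<in>R. fst p < fst q"
proof -
  define h where "h = card P div 2"
  define L where "L = {p\<in>P. 0 \<le> x_rank P p \<and> x_rank P p < h}"
  define R where "R = {p\<in>P. h \<le> x_rank P p \<and> x_rank P p < card P}"
  have "L \<union> R = P" "L \<inter> R = {}" unfolding L_def R_def using x_rank_less_card[OF assms(1)] by auto
  moreover have "card L \<le> h" "card R \<le> card P - h"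
    unfolding L_def R_def using card_x_rank_interval[OF assms(1,2), of 0 h]
      card_x_rank_interval[OF assms(1,2), of h "card P"] by simp_all
  then have "2 * card L \<le> card P" "3 * card R \<le> 2 * card P" unfolding h_def using assms(3) by auto
  moreover have "fst p < fst q" if "p \<in> L" "q \<in> R" for p q
    using that x_rank_less_imp_fst_less[OF assms(1), of p q] unfolding L_def R_def by simp
  ultimately show thesis using that by blast
qed

definition weak_net :: "real \<Rightarrow> pt set \<Rightarrow> pt set \<Rightarrow> bool" where
  "weak_net x A T \<longleftrightarrow> (\<forall>K. convex K \<and> x * real (card A) \<le> real (card (K \<inter> A)) \<longrightarrow> T \<inter> K \<noteq> {})"

definition bounded_weak_nets :: "(pt set \<Rightarrow> bool) \<Rightarrow> real \<Rightarrow> nat \<Rightarrow> bool" where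
  "bounded_weak_nets Q x f \<longleftrightarrow>
     (\<forall>A. finite A \<and> A \<noteq> {} \<and> Q A \<longrightarrow> (\<exists>T. finite T \<and> card T \<le> f \<and> weak_net x A T))"

text \<open>For empty A the net condition would ask T to meet every convex set, hence the guard
  K \<inter> A \<noteq> {}.\<close>

lemma bounded_weak_netsD:
  assumes "bounded_weak_nets Q x f" "finite A" "Q A"
  obtains T where "finite T" "card T \<le> f"
    "\<And>K. convex K \<Longrightarrow> x * real (card A) \<le> real (card (K \<inter> A)) \<Longrightarrow> K \<inter> A \<noteq> {} \<Longrightarrow> T \<inter> K \<noteq> {}"
proof (cases "A = {}")
  case True
  show thesis by (rule that[of "{}"]) (use True in auto)
next
  case False
  then obtain T where "finite T" "card T \<le> f" "weak_net x A T"
    using assms unfolding bounded_weak_nets_def by blast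
  then show thesis using that unfolding weak_net_def by blast
qed

lemma bounded_weak_nets_trivial:
  assumes "x > 1"
  shows "bounded_weak_nets Q x 0"
proof -
  have "weak_net x A {}" if "finite A" "A \<noteq> {}" for A :: "pt set"
  proof -
    have "real (card (K \<inter> A)) \<le> real (card A)" for K using that(1) by (simp add: card_mono)
    moreover have "real (card A) < x * real (card A)" using that assms by (simp add: card_gt_0_iff)
    ultimately show ?thesis unfolding weak_net_def by (meson not_le order_trans)
  qed
  then show ?thesis unfolding bounded_weak_nets_def by (metis card.empty finite.emptyI order_refl)
qed

lemma crossing_halves_transversal:
  fixes L R :: "pt set" and N :: nat and x :: real
  assumes fin: "finite L" "finite R" and left: "\<forall>p\<in>L. \<forall>q\<in>R. fst p \<le> fst q"
    and card: "card L \<le> N" "card R \<le> N" and xN: "0 < x * real N"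
  obtains T where "finite T" "card T \<le> nat \<lceil>16 / x^2\<rceil>"
    "\<And>K. convex K \<Longrightarrow> (x * real N)^2 / 16 \<le> real (card (K \<inter> L) * card (K \<inter> R)) \<Longrightarrow> T \<inter> K \<noteq> {}"
proof -
  define k where "k = nat \<lceil>(x * real N)^2 / 16\<rceil>"
  have k: "(x * real N)^2 / 16 \<le> real k" "0 < k" unfolding k_def using xN by (auto simp: zero_less_mult_iff)
  obtain T where T: "finite T" "card T * k \<le> card L * card R"
    "\<And>K. convex K \<Longrightarrow> k \<le> card (K \<inter> L) * card (K \<inter> R) \<Longrightarrow> T \<inter> K \<noteq> {}"
    using bipartite_pairs_transversal[OF fin k(2) left] by blast
  have "card T * k \<le> N * N" using T(2) card mult_le_mono[of "card L" N "card R" N] by simp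
  then have "real (card T) * real k \<le> real N * real N" by (metis of_nat_le_iff of_nat_mult)
  moreover have "real (card T) * ((x * real N)^2 / 16) \<le> real (card T) * real k"
    using mult_left_mono[OF k(1), of "real (card T)"] by simp
  ultimately have "(real (card T) * x^2) * (real N)^2 \<le> 16 * (real N)^2"
    by (simp add: power2_eq_square algebra_simps)
  then have "real (card T) * x^2 \<le> 16" using xN by (simp add: zero_less_mult_iff)
  then have "real (card T) \<le> 16 / x^2" using xN by (simp add: pos_le_divide_eq zero_less_mult_iff)
  then have "card T \<le> nat \<lceil>16 / x^2\<rceil>" by linarith
  moreover have "T \<inter> K \<noteq> {}"
    if "convex K" "(x * real N)^2 / 16 \<le> real (card (K \<inter> L) * card (K \<inter> R))" for K
    using T(3)[OF that(1)] that(2) unfolding k_def by (simp add: nat_ceiling_le_eq)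
  ultimately show thesis using that T(1) by blast
qed

text \<open>A convex set heavy on neither half contains at least (xN/4)^2 pairs across the halving line;
  one heavy on a half is heavier there by the factor 9/8 that drives the recursion.\<close>

lemma weak_net_of_halves:
  fixes L R :: "pt set"
  assumes fin: "finite L" "finite R" and disj: "L \<inter> R = {}" and x: "0 < x"
    and sizes: "2 * card L \<le> card (L \<union> R)" "3 * card R \<le> 2 * card (L \<union> R)"
    and TL: "\<And>K. convex K \<Longrightarrow> 9/8 * x * real (card L) \<le> real (card (K \<inter> L)) \<Longrightarrow> K \<inter> L \<noteq> {} \<Longrightarrow> TL \<inter> K \<noteq> {}"
    and TR: "\<And>K. convex K \<Longrightarrow> 9/8 * x * real (card R) \<le> real (card (K \<inter> R)) \<Longrightarrow> K \<inter> R \<noteq> {} \<Longrightarrow> TR \<inter> K \<noteq> {}"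
    and TC: "\<And>K. convex K \<Longrightarrow> (x * card (L \<union> R))^2 / 16 \<le> real (card (K \<inter> L) * card (K \<inter> R))
      \<Longrightarrow> TC \<inter> K \<noteq> {}"
  shows "weak_net x (L \<union> R) (TL \<union> TR \<union> TC)"
  unfolding weak_net_def
proof (intro allI impI)
  fix K assume K: "convex K \<and> x * real (card (L \<union> R)) \<le> real (card (K \<inter> (L \<union> R)))"
  define N a b where "N = card (L \<union> R)" and "a = card (K \<inter> L)" and "b = card (K \<inter> R)"
  have "card (K \<inter> (L \<union> R)) = a + b"
    unfolding a_def b_def using fin disj by (simp add: Int_Un_distrib card_Un_disjoint disjoint_iff)
  then have ab: "x * N \<le> a + b" using K unfolding N_def by simp
  have "x * real (card L) \<le> x * (N / 2)" "x * real (card R) \<le> x * (2 * N / 3)"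
    using sizes x unfolding N_def by (intro mult_left_mono; linarith)+
  then have bounds: "9/8 * x * real (card L) \<le> 9/16 * (x * N)" "9/8 * x * real (card R) \<le> 3/4 * (x * N)"
    by linarith+
  have xN: "0 \<le> x * N" using x by simp
  consider "x * N / 4 \<le> a" "x * N / 4 \<le> b" | "3/4 * (x * N) < a" | "3/4 * (x * N) < b"
    using ab by linarith
  then show "(TL \<union> TR \<union> TC) \<inter> K \<noteq> {}"
  proof cases
    case 1
    then have "(x * N)^2 / 16 \<le> real (a * b)"
      using mult_mono[OF 1] xN by (simp add: power2_eq_square)
    then have "TC \<inter> K \<noteq> {}" using TC K unfolding a_def b_def N_def by blast
    then show ?thesis by blast
  next
    case 2
    then have "K \<inter> L \<noteq> {}" using xN unfolding a_def by (auto simp: mult_nonneg_nonneg)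
    moreover have "9/8 * x * real (card L) \<le> real (card (K \<inter> L))" using 2 bounds(1) unfolding a_def by linarith
    ultimately have "TL \<inter> K \<noteq> {}" using TL K by blast
    then show ?thesis by blast
  next
    case 3
    then have "K \<inter> R \<noteq> {}" using xN unfolding b_def by (auto simp: mult_nonneg_nonneg)
    moreover have "9/8 * x * real (card R) \<le> real (card (K \<inter> R))" using 3 bounds(2) unfolding b_def by linarith
    ultimately have "TR \<inter> K \<noteq> {}" using TR K by blast
    then show ?thesis by blast
  qed
qed

lemma bounded_weak_nets_step:
  assumes x: "x > 0" and IH: "bounded_weak_nets (inj_on fst) (9/8 * x) f"
  shows "bounded_weak_nets (inj_on fst) x (2 * f + nat \<lceil>16 / x^2\<rceil> + 2)"
  unfolding bounded_weak_nets_def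
proof (intro allI impI)
  fix A :: "pt set" assume "finite A \<and> A \<noteq> {} \<and> inj_on fst A"
  then have A: "finite A" "A \<noteq> {}" "inj_on fst A" by auto
  show "\<exists>T. finite T \<and> card T \<le> 2 * f + nat \<lceil>16 / x^2\<rceil> + 2 \<and> weak_net x A T"
  proof (cases "card A \<le> 2")
    case True
    have "A \<inter> K \<noteq> {}" if "x * real (card A) \<le> real (card (K \<inter> A))" for K
    proof
      assume "A \<inter> K = {}"
      then have "K \<inter> A = {}" by blast
      moreover have "0 < x * real (card A)" using x A by (simp add: card_gt_0_iff)
      ultimately show False using that by simp
    qed
    then have "weak_net x A A" unfolding weak_net_def by blast
    then show ?thesis using True A(1) by (intro exI[of _ A]) auto
  next
    case False
    then have "3 \<le> card A" by simp
    then obtain L R where LR: "L \<union> R = A" "L \<inter> R = {}" "2 * card L \<le> card A" "3 * card R \<le> 2 * card A"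
      and left: "\<forall>p\<in>L. \<forall>q\<in>R. fst p < fst q"
      by (rule x_rank_halves[OF A(1,3)])
    have fin: "finite L" "finite R" and inj: "inj_on fst L" "inj_on fst R"
      using LR(1) A(1,3) by (auto intro: inj_on_subset)
    obtain TL where TL: "finite TL" "card TL \<le> f" "\<And>K. convex K \<Longrightarrow>
        9/8 * x * real (card L) \<le> real (card (K \<inter> L)) \<Longrightarrow> K \<inter> L \<noteq> {} \<Longrightarrow> TL \<inter> K \<noteq> {}"
      using bounded_weak_netsD[OF IH fin(1) inj(1)] by blast
    obtain TR where TR: "finite TR" "card TR \<le> f" "\<And>K. convex K \<Longrightarrow>
        9/8 * x * real (card R) \<le> real (card (K \<inter> R)) \<Longrightarrow> K \<inter> R \<noteq> {} \<Longrightarrow> TR \<inter> K \<noteq> {}"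
      using bounded_weak_netsD[OF IH fin(2) inj(2)] by blast
    have left': "\<forall>p\<in>L. \<forall>q\<in>R. fst p \<le> fst q" using left by (simp add: less_imp_le)
    have sizes: "card L \<le> card A" "card R \<le> card A" using LR(3,4) by linarith+
    have "0 < x * card A" using x A by (simp add: card_gt_0_iff)
    obtain TC where TC: "finite TC" "card TC \<le> nat \<lceil>16 / x^2\<rceil>"
      "\<And>K. convex K \<Longrightarrow> (x * card A)^2 / 16 \<le> real (card (K \<inter> L) * card (K \<inter> R)) \<Longrightarrow> TC \<inter> K \<noteq> {}"
      using crossing_halves_transversal[OF fin left' sizes \<open>0 < x * card A\<close>] by blast
    have "weak_net x (L \<union> R) (TL \<union> TR \<union> TC)"
      by (rule weak_net_of_halves[OF fin LR(2) x]) (use LR(1,3,4) TL(3) TR(3) TC(3) in simp_all)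
    then have "weak_net x A (TL \<union> TR \<union> TC)" using LR(1) by simp
    moreover have "card (TL \<union> TR \<union> TC) \<le> 2 * f + nat \<lceil>16 / x^2\<rceil> + 2"
      using TL(2) TR(2) TC(2) card_Un_le[of "TL \<union> TR" TC] card_Un_le[of TL TR] by linarith
    ultimately show ?thesis using TL(1) TR(1) TC(1) by (intro exI[of _ "TL \<union> TR \<union> TC"]) simp
  qed
qed

text \<open>Each halving step multiplies the ratio by 9/8; once it exceeds 1 the empty net suffices.\<close>

lemma bounded_weak_nets_distinct_x_exist:
  assumes "x > 0"
  shows "\<exists>f. bounded_weak_nets (inj_on fst) x f"
proof -
  have "\<forall>x>0. 1 < x * (9/8)^n \<longrightarrow> (\<exists>f. bounded_weak_nets (inj_on fst) x f)" for n
  proof (induction n)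
    case 0
    then show ?case using bounded_weak_nets_trivial by auto
  next
    case (Suc n)
    show ?case
    proof (intro allI impI)
      fix x :: real assume "x > 0" "1 < x * (9/8)^Suc n"
      then have "9/8 * x > 0" "1 < (9/8 * x) * (9/8)^n" by (simp_all add: algebra_simps)
      then obtain f where "bounded_weak_nets (inj_on fst) (9/8 * x) f" using Suc.IH by blast
      then show "\<exists>f. bounded_weak_nets (inj_on fst) x f"
        using bounded_weak_nets_step[OF \<open>x > 0\<close>] by blast
    qed
  qed
  moreover obtain n where "1 / x < (9/8::real)^n" using real_arch_pow[of "9/8::real" "1/x"] by auto
  then have "1 < x * (9/8)^n" using assms by (simp add: field_simps)
  ultimately show ?thesis using assms by blast
qed

definition shear :: "real \<Rightarrow> pt \<Rightarrow> pt" where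
  "shear d p = (fst p + d * snd p, snd p)"

lemma shear_shear_neg [simp]: "shear (- d) (shear d p) = p"
  by (simp add: shear_def)

lemma inj_shear: "inj (shear d)"
  by (metis injI shear_shear_neg)

lemma linear_shear: "linear (shear d)"
  by (rule linearI) (simp_all add: shear_def algebra_simps)

text \<open>Only finitely many slopes d make two points of A collide under the shear.\<close>

lemma exists_shear_inj_fst:
  assumes "finite A"
  obtains d where "inj_on fst (shear d ` A)"
proof -
  define D where "D = (\<lambda>(p, q). (fst q - fst p) / (snd p - snd q)) ` (A \<times> A)"
  have "finite D" unfolding D_def using assms by simp
  then obtain d where "d \<notin> D" using ex_new_if_finite[OF infinite_UNIV_char_0] by blast
  have collide: "p = q" if "p \<in> A" "q \<in> A" "fst (shear d p) = fst (shear d q)" for p q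
  proof (cases "snd p = snd q")
    case True
    then show ?thesis using that(3) by (simp add: shear_def prod_eq_iff)
  next
    case False
    then have "d = (fst q - fst p) / (snd p - snd q)"
      using that(3) by (simp add: shear_def field_simps)
    then have "d \<in> D" unfolding D_def using that(1,2) by force
    then show ?thesis using \<open>d \<notin> D\<close> by blast
  qed
  have "inj_on fst (shear d ` A)"
  proof (rule inj_onI)
    fix u w assume "u \<in> shear d ` A" "w \<in> shear d ` A" "fst u = fst w"
    then show "u = w" using collide by blast
  qed
  then show thesis by (rule that)
qed

lemma bounded_weak_nets_exist:
  assumes "x > 0"
  shows "\<exists>f. bounded_weak_nets (\<lambda>_. True) x f"
proof -
  obtain f where f: "bounded_weak_nets (inj_on fst) x f"
    using bounded_weak_nets_distinct_x_exist[OF assms] by blast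
  have "\<exists>T. finite T \<and> card T \<le> f \<and> weak_net x A T" if A: "finite A" "A \<noteq> {}" for A
  proof -
    obtain d where d: "inj_on fst (shear d ` A)" using exists_shear_inj_fst[OF A(1)] by blast
    have inj: "inj_on (shear d) S" for S using inj_shear by (rule inj_on_subset) simp
    have "finite (shear d ` A)" "shear d ` A \<noteq> {}" using A by simp_all
    then obtain T where T: "finite T" "card T \<le> f" "weak_net x (shear d ` A) T"
      using f d unfolding bounded_weak_nets_def by blast
    have "shear (- d) ` T \<inter> K \<noteq> {}"
      if K: "convex K" "x * real (card A) \<le> real (card (K \<inter> A))" for K
    proof -
      have "shear d ` K \<inter> shear d ` A = shear d ` (K \<inter> A)"
        using inj_shear by (simp add: image_Int)
      then have "card (shear d ` K \<inter> shear d ` A) = card (K \<inter> A)"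
        by (simp add: card_image[OF inj])
      moreover have "card (shear d ` A) = card A" by (simp add: card_image[OF inj])
      moreover have "convex (shear d ` K)" using K(1) convex_linear_image[OF linear_shear] by blast
      ultimately have "T \<inter> shear d ` K \<noteq> {}" using T(3) K(2) unfolding weak_net_def by simp
      then show ?thesis by force
    qed
    then have "weak_net x A (shear (- d) ` T)" unfolding weak_net_def by blast
    moreover have "card (shear (- d) ` T) \<le> f" using card_image_le[OF T(1)] T(2) le_trans by blast
    moreover have "finite (shear (- d) ` T)" using T(1) by simp
    ultimately show ?thesis by blast
  qed
  then show ?thesis unfolding bounded_weak_nets_def by blast
qed

lemma f2_eq_Least: "x < 1 \<Longrightarrow> f2 x = (LEAST f. bounded_weak_nets (\<lambda>_. True) x f)"
  unfolding f2_def bounded_weak_nets_def weak_net_def by simp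

lemma bounded_weak_nets_f2:
  assumes "x > 0"
  shows "bounded_weak_nets (\<lambda>_. True) x (f2 x)"
proof (cases "x < 1")
  case True
  obtain f where "bounded_weak_nets (\<lambda>_. True) x f" using bounded_weak_nets_exist[OF assms] by blast
  then have "bounded_weak_nets (\<lambda>_. True) x (LEAST f. bounded_weak_nets (\<lambda>_. True) x f)"
    by (rule LeastI)
  then show ?thesis using f2_eq_Least[OF True] by simp
next
  case False
  have "weak_net x A {a}" if A: "finite A" "a \<in> A" for A a
  proof -
    have "K \<inter> A = A" if "x * real (card A) \<le> real (card (K \<inter> A))" for K
    proof -
      have "real (card A) * 1 \<le> real (card A) * x" using False by (intro mult_left_mono) simp_all
      then have "card A \<le> card (K \<inter> A)" using that by (simp add: mult.commute)
      then show ?thesis using A(1) by (metis Int_lower2 card_seteq)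
    qed
    then show ?thesis using A(2) unfolding weak_net_def by blast
  qed
  then have "bounded_weak_nets (\<lambda>_. True) x 1" unfolding bounded_weak_nets_def by fastforce
  moreover have "f2 x = 1" using False unfolding f2_def by simp
  ultimately show ?thesis by simp
qed

lemma f2_ge_1:
  assumes "x > 0"
  shows "1 \<le> f2 x"
proof (cases "x < 1")
  case True
  obtain T where T: "finite T" "card T \<le> f2 x" "weak_net x {(0, 0)} T"
    using bounded_weak_nets_f2[OF assms] unfolding bounded_weak_nets_def by blast
  then have "T \<inter> UNIV \<noteq> {}" using True unfolding weak_net_def by auto
  then have "1 \<le> card T" using T(1) by (simp add: Suc_leI card_gt_0_iff)
  then show ?thesis using T(2) by linarith
qed (simp add: f2_def)

lemma vertical_strips:
  fixes P :: "pt set"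
  assumes P: "finite P" "inj_on fst P" and r: "1 \<le> r" "r \<le> card P"
  obtains \<sigma> :: "pt \<Rightarrow> nat" where "\<forall>p\<in>P. \<sigma> p < r" "\<forall>p\<in>P. \<forall>q\<in>P. \<sigma> p < \<sigma> q \<longrightarrow> fst p < fst q"
    "\<forall>i. real (card {p\<in>P. \<sigma> p = i}) \<le> 2 * real (card P) / real r"
proof -
  define d where "d = card P div r + 1"
  have d: "0 < d" "card P < r * d" "real d \<le> 2 * real (card P) / real r"
  proof -
    show "0 < d" "card P < r * d" unfolding d_def using r(1) by (simp_all add: dividend_less_times_div)
    have "real (card P div r) \<le> real (card P) / real r" by (rule of_nat_div_le_of_nat)
    moreover have "1 \<le> real (card P) / real r" using r by simp
    ultimately show "real d \<le> 2 * real (card P) / real r" unfolding d_def by simp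
  qed
  define \<sigma> where "\<sigma> p = x_rank P p div d" for p
  have "\<sigma> p < r" if "p \<in> P" for p
  proof -
    have "x_rank P p < r * d" using x_rank_less_card[OF P(1) that] d(2) by linarith
    then show ?thesis unfolding \<sigma>_def by (simp add: div_less_iff_less_mult[OF d(1)] mult.commute)
  qed
  moreover have "fst p < fst q" if "\<sigma> p < \<sigma> q" for p q
  proof -
    have "\<not> x_rank P q \<le> x_rank P p"
      using that div_le_mono[of "x_rank P q" "x_rank P p" d] unfolding \<sigma>_def by linarith
    then show ?thesis using x_rank_less_imp_fst_less[OF P(1)] by simp
  qed
  moreover have "real (card {p\<in>P. \<sigma> p = i}) \<le> 2 * real (card P) / real r" for i
  proof -
    have "i * d \<le> n \<and> n < i * d + d" if "n div d = i" for n
    proof -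
      have "i * d + n mod d = n" using that div_mult_mod_eq[of n d] by simp
      then show ?thesis using mod_less_divisor[OF d(1), of n] by linarith
    qed
    then have "{p\<in>P. \<sigma> p = i} \<subseteq> {p\<in>P. i * d \<le> x_rank P p \<and> x_rank P p < i * d + d}"
      unfolding \<sigma>_def by blast
    from card_mono[OF _ this] have "card {p\<in>P. \<sigma> p = i} \<le> d"
      using card_x_rank_interval[OF P, of "i * d" "i * d + d"] P(1) by simp
    then show ?thesis using d(3) by linarith
  qed
  ultimately show thesis using that[of \<sigma>] by blast
qed

definition crossing_pairs :: "(pt \<Rightarrow> nat) \<Rightarrow> pt set \<Rightarrow> pt set set \<Rightarrow> nat \<Rightarrow> (pt \<times> pt) set" where
  "crossing_pairs \<sigma> P E i = {f\<in>P \<times> P. \<sigma> (fst f) = i \<and> i < \<sigma> (snd f) \<and> {fst f, snd f} \<in> E}"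

lemma finite_crossing_pairs: "finite P \<Longrightarrow> finite (crossing_pairs \<sigma> P E i)"
  unfolding crossing_pairs_def by simp

lemma sum_card_crossing_pairs_le:
  assumes "finite P" "finite E" "finite I"
    and order: "\<forall>p\<in>P. \<forall>q\<in>P. \<sigma> p < \<sigma> q \<longrightarrow> fst p < fst q"
  shows "(\<Sum>i\<in>I. card (crossing_pairs \<sigma> P E i)) \<le> card E"
proof -
  let ?U = "\<Union>i\<in>I. crossing_pairs \<sigma> P E i"
  have "crossing_pairs \<sigma> P E i \<inter> crossing_pairs \<sigma> P E j = {}" if "i \<noteq> j" for i j
    using that unfolding crossing_pairs_def by blast
  then have "card ?U = (\<Sum>i\<in>I. card (crossing_pairs \<sigma> P E i))"
    using assms(3) finite_crossing_pairs[OF assms(1)] by (intro card_UN_disjoint) auto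
  moreover have "card ?U \<le> card E"
  proof (rule card_inj_on_le)
    have ordered: "fst (fst h) < fst (snd h)" if "h \<in> ?U" for h
    proof -
      have "fst h \<in> P" "snd h \<in> P" "\<sigma> (fst h) < \<sigma> (snd h)"
        using that unfolding crossing_pairs_def by auto
      then show ?thesis using order by blast
    qed
    show "inj_on (\<lambda>f. {fst f, snd f}) ?U"
    proof (rule inj_onI)
      fix f g assume fg: "f \<in> ?U" "g \<in> ?U" and "{fst f, snd f} = {fst g, snd g}"
      then have "fst f = fst g \<and> snd f = snd g \<or> fst f = snd g \<and> snd f = fst g"
        by (simp add: doubleton_eq_iff)
      then show "f = g" using ordered[OF fg(1)] ordered[OF fg(2)] by (auto simp: prod_eq_iff)
    qed
    show "(\<lambda>f. {fst f, snd f}) ` ?U \<subseteq> E" unfolding crossing_pairs_def by auto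
  qed (rule assms(2))
  ultimately show ?thesis by simp
qed

lemma crossing_pairs_transversals:
  assumes "finite P" "s > 0"
    and order: "\<forall>p\<in>P. \<forall>q\<in>P. \<sigma> p < \<sigma> q \<longrightarrow> fst p < fst q"
  obtains TB where "\<And>i. finite (TB i)" "\<And>i. card (TB i) * s \<le> card (crossing_pairs \<sigma> P E i)"
    "\<And>i K. convex K \<Longrightarrow> s \<le> card {f\<in>crossing_pairs \<sigma> P E i. fst f \<in> K \<and> snd f \<in> K} \<Longrightarrow> TB i \<inter> K \<noteq> {}"
proof -
  have "\<forall>i. \<exists>T. finite T \<and> card T * s \<le> card (crossing_pairs \<sigma> P E i) \<and>
     (\<forall>K. convex K \<and> s \<le> card {f\<in>crossing_pairs \<sigma> P E i. fst f \<in> K \<and> snd f \<in> K} \<longrightarrow> T \<inter> K \<noteq> {})"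
  proof
    fix i
    have sep: "\<forall>f\<in>crossing_pairs \<sigma> P E i.
        fst f \<in> {p\<in>P. \<sigma> p = i} \<and> (\<forall>a\<in>{p\<in>P. \<sigma> p = i}. fst a \<le> fst (snd f))"
    proof
      fix f assume "f \<in> crossing_pairs \<sigma> P E i"
      then have "fst f \<in> P" "snd f \<in> P" "\<sigma> (fst f) = i" "i < \<sigma> (snd f)"
        unfolding crossing_pairs_def by auto
      moreover have "fst a \<le> fst (snd f)" if "a \<in> P" "\<sigma> a = i" for a
        using order \<open>snd f \<in> P\<close> \<open>i < \<sigma> (snd f)\<close> that by (metis less_imp_le)
      ultimately show "fst f \<in> {p\<in>P. \<sigma> p = i} \<and> (\<forall>a\<in>{p\<in>P. \<sigma> p = i}. fst a \<le> fst (snd f))"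
        by blast
    qed
    have "finite {p\<in>P. \<sigma> p = i}" using assms(1) by simp
    then obtain t where "\<forall>f\<in>crossing_pairs \<sigma> P E i. fst (fst f) \<le> t \<and> t \<le> fst (snd f)"
      using exists_separating_abscissa[OF _ sep] by blast
    then show "\<exists>T. finite T \<and> card T * s \<le> card (crossing_pairs \<sigma> P E i) \<and>
     (\<forall>K. convex K \<and> s \<le> card {f\<in>crossing_pairs \<sigma> P E i. fst f \<in> K \<and> snd f \<in> K} \<longrightarrow> T \<inter> K \<noteq> {})"
      by (rule straddling_pairs_transversal[OF finite_crossing_pairs[OF assms(1)] assms(2)])
  qed
  from choice[OF this] obtain TB where TB: "\<forall>i. finite (TB i) \<and> card (TB i) * s \<le> card (crossing_pairs \<sigma> P E i) \<and>
     (\<forall>K. convex K \<and> s \<le> card {f\<in>crossing_pairs \<sigma> P E i. fst f \<in> K \<and> snd f \<in> K} \<longrightarrow> TB i \<inter> K \<noteq> {})"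
    by blast
  show thesis
  proof (rule that[of TB])
    show "finite (TB i)" "card (TB i) * s \<le> card (crossing_pairs \<sigma> P E i)" for i using TB by blast+
    show "TB i \<inter> K \<noteq> {}"
      if "convex K" "s \<le> card {f\<in>crossing_pairs \<sigma> P E i. fst f \<in> K \<and> snd f \<in> K}" for i K
      using TB that by blast
  qed
qed

lemma real_choose_two_ge:
  assumes "2 \<le> m"
  shows "real m ^ 2 / 4 \<le> real (m choose 2)"
proof -
  have "real (m choose 2) = real m * (real m - 1) / 2"
    using assms by (auto simp: choose_two field_char_0_class.of_nat_div mod_eq_0_iff_dvd of_nat_diff)
  moreover have "real m * (real m / 2) \<le> real m * (real m - 1)"
    using assms by (intro mult_left_mono) simp_all
  ultimately show ?thesis by (simp add: power2_eq_square)
qed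

lemma card_edges_le_ordered_pairs:
  fixes A :: "pt set"
  assumes "finite A" "inj_on fst A"
  shows "card (edges A \<inter> E) \<le> card {f\<in>A \<times> A. fst (fst f) < fst (snd f) \<and> {fst f, snd f} \<in> E}"
proof -
  let ?D = "{f\<in>A \<times> A. fst (fst f) < fst (snd f) \<and> {fst f, snd f} \<in> E}"
  have "edges A \<inter> E \<subseteq> (\<lambda>f. {fst f, snd f}) ` ?D"
  proof
    fix e assume "e \<in> edges A \<inter> E"
    then obtain p q where pq: "p \<in> A" "q \<in> A" "p \<noteq> q" "e = {p, q}" "e \<in> E"
      unfolding edges_def by blast
    then have "fst p \<noteq> fst q" using assms(2) by (meson inj_onD)
    then consider "(p, q) \<in> ?D" | "(q, p) \<in> ?D" using pq by (fastforce simp: insert_commute)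
    then show "e \<in> (\<lambda>f. {fst f, snd f}) ` ?D"
    proof cases
      case 1
      then show ?thesis using pq(4) by (intro rev_image_eqI[of "(p, q)"]) simp_all
    next
      case 2
      then show ?thesis using pq(4) by (intro rev_image_eqI[of "(q, p)"]) (simp_all add: insert_commute)
    qed
  qed
  moreover have "finite ?D" using assms(1) by simp
  ultimately have "card (edges A \<inter> E) \<le> card ((\<lambda>f. {fst f, snd f}) ` ?D)"
    by (intro card_mono) simp_all
  also have "\<dots> \<le> card ?D" using \<open>finite ?D\<close> by (rule card_image_le)
  finally show ?thesis .
qed

lemma card_same_class_pairs_le:
  assumes "finite A" and small: "\<And>i. real (card {a\<in>A. \<sigma> a = i}) \<le> B"
  shows "real (card {f\<in>A \<times> A. \<sigma> (fst f) = \<sigma> (snd f)}) \<le> B * real (card A)"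
proof -
  let ?C = "\<lambda>i. {a\<in>A. \<sigma> a = i}"
  have fin: "finite (\<sigma> ` A)" "\<And>i. finite (?C i)" using assms(1) by simp_all
  have "A = (\<Union>i\<in>\<sigma> ` A. ?C i)" by auto
  moreover have "card (\<Union>i\<in>\<sigma> ` A. ?C i) = (\<Sum>i\<in>\<sigma> ` A. card (?C i))"
    using fin by (intro card_UN_disjoint) auto
  ultimately have card_A: "card A = (\<Sum>i\<in>\<sigma> ` A. card (?C i))" by simp
  have "{f\<in>A \<times> A. \<sigma> (fst f) = \<sigma> (snd f)} = (\<Union>i\<in>\<sigma> ` A. ?C i \<times> ?C i)" by auto
  moreover have "card (\<Union>i\<in>\<sigma> ` A. ?C i \<times> ?C i) = (\<Sum>i\<in>\<sigma> ` A. card (?C i \<times> ?C i))"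
    using fin by (intro card_UN_disjoint) auto
  ultimately have "real (card {f\<in>A \<times> A. \<sigma> (fst f) = \<sigma> (snd f)})
      = (\<Sum>i\<in>\<sigma> ` A. real (card (?C i)) * real (card (?C i)))"
    by (simp add: card_cartesian_product)
  also have "\<dots> \<le> (\<Sum>i\<in>\<sigma> ` A. B * real (card (?C i)))"
    using small by (intro sum_mono mult_right_mono) simp_all
  also have "\<dots> = B * real (card A)" using card_A by (simp add: sum_distrib_left)
  finally show ?thesis .
qed

text \<open>The sample spans at least \<sigma>m^2/4 ordered edges, at most \<sigma>m^2/8 of which join points of one
  strip; the remaining ones leave some strip, and one of the r strips gets its share.\<close>

lemma many_crossing_pairs:
  fixes P PK :: "pt set"
  assumes P: "finite P" "inj_on fst P"
    and range: "\<forall>p\<in>P. \<sigma> p < r" and order: "\<forall>p\<in>P. \<forall>q\<in>P. \<sigma> p < \<sigma> q \<longrightarrow> fst p < fst q"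
    and PK: "PK \<subseteq> P" "PK \<noteq> {}" and sg: "0 < sg" "sg \<le> 1"
    and dense: "sg * real (card PK choose 2) \<le> real (card (edges PK \<inter> E))"
    and sparse: "\<And>i. real (card {p\<in>PK. \<sigma> p = i}) \<le> sg * real (card PK) / 8"
  shows "\<exists>i<r. sg * real (card PK) ^ 2 / (8 * real r)
           \<le> real (card {f\<in>crossing_pairs \<sigma> P E i. fst f \<in> PK \<and> snd f \<in> PK})"
proof -
  define m where "m = card PK"
  define D where "D = {f\<in>PK \<times> PK. fst (fst f) < fst (snd f) \<and> {fst f, snd f} \<in> E}"
  define W where "W = {f\<in>PK \<times> PK. \<sigma> (fst f) = \<sigma> (snd f)}"
  define G where "G i = {f\<in>crossing_pairs \<sigma> P E i. fst f \<in> PK \<and> snd f \<in> PK}" for i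
  have finPK: "finite PK" using PK(1) P(1) finite_subset by blast
  have "2 \<le> m"
  proof (rule ccontr)
    assume "\<not> 2 \<le> m"
    moreover have "0 < m" unfolding m_def using PK(2) finPK by (simp add: card_gt_0_iff)
    ultimately have "card PK = 1" unfolding m_def by simp
    then obtain p where "PK = {p}" by (rule card_1_singletonE)
    then have "{q\<in>PK. \<sigma> q = \<sigma> p} = {p}" by auto
    then show False using sparse[of "\<sigma> p"] sg(2) \<open>PK = {p}\<close> by simp
  qed
  have "sg * (real m ^ 2 / 4) \<le> sg * real (m choose 2)"
    using real_choose_two_ge[OF \<open>2 \<le> m\<close>] sg(1) by simp
  also have "\<dots> \<le> real (card D)"
    using dense card_edges_le_ordered_pairs[OF finPK inj_on_subset[OF P(2) PK(1)], of E]
    unfolding m_def D_def by linarith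
  finally have D: "sg * real m ^ 2 / 4 \<le> real (card D)" by simp
  have W: "real (card W) \<le> sg * real m ^ 2 / 8"
    using card_same_class_pairs_le[OF finPK sparse] unfolding W_def m_def by (simp add: power2_eq_square)
  have "D - W \<subseteq> (\<Union>i<r. G i)"
  proof
    fix f assume f: "f \<in> D - W"
    then have PKf: "fst f \<in> PK" "snd f \<in> PK" and "fst (fst f) < fst (snd f)" "{fst f, snd f} \<in> E"
      and "\<sigma> (fst f) \<noteq> \<sigma> (snd f)" unfolding D_def W_def by auto
    moreover have P_f: "fst f \<in> P" "snd f \<in> P" using PKf PK(1) by auto
    moreover have "\<not> \<sigma> (snd f) < \<sigma> (fst f)"
      using order P_f \<open>fst (fst f) < fst (snd f)\<close> by (meson less_asym)
    ultimately have "f \<in> G (\<sigma> (fst f))" unfolding G_def crossing_pairs_def by (simp add: mem_Times_iff)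
    moreover have "\<sigma> (fst f) < r" using range P_f by blast
    ultimately show "f \<in> (\<Union>i<r. G i)" by blast
  qed
  moreover have "finite (\<Union>i<r. G i)" unfolding G_def using finite_crossing_pairs[OF P(1)] by simp
  ultimately have "card (D - W) \<le> card (\<Union>i<r. G i)" by (rule card_mono[rotated])
  also have "\<dots> \<le> (\<Sum>i<r. card (G i))" by (rule card_UN_le) simp
  finally have "card (D - W) \<le> (\<Sum>i<r. card (G i))" .
  moreover have "card D \<le> card (D - W) + card W"
  proof -
    have "finite ((D - W) \<union> W)" unfolding D_def W_def using finPK by simp
    then have "card D \<le> card ((D - W) \<union> W)" by (rule card_mono) blast
    then show ?thesis using card_Un_le[of "D - W" W] by linarith
  qed
  ultimately have sum: "sg * real m ^ 2 / 8 \<le> (\<Sum>i<r. real (card (G i)))"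
    using D W by (simp add: of_nat_sum[symmetric] del: of_nat_sum)
  obtain p where "p \<in> PK" using PK(2) by blast
  then have "0 < r" using PK(1) range by fastforce
  show ?thesis
  proof (rule ccontr)
    assume "\<not> ?thesis"
    then have "\<And>i. i \<in> {..<r} \<Longrightarrow> real (card (G i)) < sg * real m ^ 2 / (8 * real r)"
      unfolding G_def m_def by auto
    then have "(\<Sum>i<r. real (card (G i))) < real (card {..<r}) * (sg * real m ^ 2 / (8 * real r))"
      using \<open>0 < r\<close> by (intro sum_bounded_above_strict) auto
    then have "(\<Sum>i<r. real (card (G i))) < sg * real m ^ 2 / 8" using \<open>0 < r\<close> by simp
    then show False using sum by linarith
  qed
qed

lemma general_position_inj_on_fst: "general_position P \<Longrightarrow> inj_on fst P"
  unfolding general_position_def by (meson inj_onI)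

lemma transversal_budget:
  fixes c e s sg eps n m r :: real
  assumes "c * s \<le> e" "sg * m ^ 2 / (8 * r) \<le> s" "eps * n \<le> m"
    and "0 < sg" "0 < eps" "0 < n" "1 \<le> r" "0 \<le> c"
  shows "c \<le> 8 * r ^ 2 * e / (sg * eps ^ 2 * n ^ 2)"
proof -
  have "(eps * n) ^ 2 \<le> m ^ 2" using assms(3,5,6) by (intro power_mono) simp_all
  then have "sg * (eps * n) ^ 2 / (8 * r) \<le> sg * m ^ 2 / (8 * r)"
    using assms(4,7) by (intro divide_right_mono mult_left_mono) simp_all
  then have budget: "c * (sg * (eps * n) ^ 2 / (8 * r)) \<le> e"
    using assms(1,2,8) by (meson mult_left_mono order_trans)
  then have "c \<le> 8 * r * e / (sg * eps ^ 2 * n ^ 2)"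
    using assms(4-7) by (simp add: field_simps power_mult_distrib)
  also have "\<dots> \<le> 8 * r ^ 2 * e / (sg * eps ^ 2 * n ^ 2)"
  proof -
    have "0 \<le> e" using budget assms(4-8) by (smt (verit) divide_nonneg_pos mult_nonneg_nonneg zero_le_power2)
    then have "8 * r * e \<le> 8 * r ^ 2 * e" using assms(7) by (simp add: power2_eq_square mult_right_mono)
    then show ?thesis using assms(4-6) by (simp add: divide_right_mono)
  qed
  finally show ?thesis .
qed

lemma bounded_weak_nets_family:
  assumes "bounded_weak_nets Q x f" "\<And>i. finite (A i)" "\<And>i. Q (A i)"
  obtains TA where "\<And>i. finite (TA i)" "\<And>i. card (TA i) \<le> f"
    "\<And>i K. convex K \<Longrightarrow> x * real (card (A i)) \<le> real (card (K \<inter> A i)) \<Longrightarrow> K \<inter> A i \<noteq> {} \<Longrightarrow> TA i \<inter> K \<noteq> {}"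
proof -
  have "\<forall>i. \<exists>T. finite T \<and> card T \<le> f \<and>
      (\<forall>K. convex K \<and> x * real (card (A i)) \<le> real (card (K \<inter> A i)) \<and> K \<inter> A i \<noteq> {} \<longrightarrow> T \<inter> K \<noteq> {})"
  proof
    fix i
    obtain T where "finite T" "card T \<le> f" "\<And>K. convex K \<Longrightarrow>
        x * real (card (A i)) \<le> real (card (K \<inter> A i)) \<Longrightarrow> K \<inter> A i \<noteq> {} \<Longrightarrow> T \<inter> K \<noteq> {}"
      using bounded_weak_netsD[OF assms(1) assms(2)[of i] assms(3)[of i]] by blast
    then show "\<exists>T. finite T \<and> card T \<le> f \<and>
      (\<forall>K. convex K \<and> x * real (card (A i)) \<le> real (card (K \<inter> A i)) \<and> K \<inter> A i \<noteq> {} \<longrightarrow> T \<inter> K \<noteq> {})"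
      by blast
  qed
  from choice[OF this] obtain TA where TA: "\<forall>i. finite (TA i) \<and> card (TA i) \<le> f \<and>
      (\<forall>K. convex K \<and> x * real (card (A i)) \<le> real (card (K \<inter> A i)) \<and> K \<inter> A i \<noteq> {} \<longrightarrow> TA i \<inter> K \<noteq> {})"
    by blast
  show thesis
  proof (rule that[of TA])
    show "finite (TA i)" "card (TA i) \<le> f" for i using TA by blast+
    show "TA i \<inter> K \<noteq> {}"
      if "convex K" "x * real (card (A i)) \<le> real (card (K \<inter> A i))" "K \<inter> A i \<noteq> {}" for i K
      using TA that by blast
  qed
qed

lemma finite_edges: "finite P \<Longrightarrow> finite (edges P)"
  by (rule finite_subset[of _ "Pow P"]) (auto simp: edges_def)

lemma card_UN_lessThan_le:
  assumes "\<And>i. card (A i) \<le> f"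
  shows "card (\<Union>i<r. A i) \<le> r * f"
proof -
  have "card (\<Union>i<r. A i) \<le> (\<Sum>i<r. card (A i))" by (rule card_UN_le) simp
  also have "\<dots> \<le> (\<Sum>i<r. f)" by (rule sum_mono) (rule assms)
  finally show ?thesis by simp
qed

lemma dense_strip_or_crossing_edges:
  fixes P PK K :: "pt set"
  assumes P: "finite P" "inj_on fst P"
    and \<sigma>: "\<forall>p\<in>P. \<sigma> p < r" "\<forall>p\<in>P. \<forall>q\<in>P. \<sigma> p < \<sigma> q \<longrightarrow> fst p < fst q"
    and strip_size: "\<And>i. real (card {p\<in>P. \<sigma> p = i}) \<le> 2 * real (card P) / real r"
    and PK: "PK \<subseteq> P \<inter> K" "PK \<noteq> {}" "eps * real (card P) \<le> real (card PK)"
    and dense: "sg * real (card PK choose 2) \<le> real (card (edges PK \<inter> E))"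
    and eps: "0 < eps" and sg: "0 < sg" "sg \<le> 1" and r: "1 \<le> r"
  shows "\<exists>i<r. (1/16 * eps * sg * real r * real (card {p\<in>P. \<sigma> p = i})
              \<le> real (card (K \<inter> {p\<in>P. \<sigma> p = i})) \<and> K \<inter> {p\<in>P. \<sigma> p = i} \<noteq> {})
           \<or> sg * real (card PK) ^ 2 / (8 * real r)
              \<le> real (card {f\<in>crossing_pairs \<sigma> P E i. fst f \<in> K \<and> snd f \<in> K})"
proof (cases "\<exists>i. sg * real (card PK) / 8 < real (card {p\<in>PK. \<sigma> p = i})")
  case True
  then obtain i where i: "sg * real (card PK) / 8 < real (card {p\<in>PK. \<sigma> p = i})" by blast
  moreover have "finite PK" using PK(1) P(1) finite_subset by blast
  then have "0 < sg * real (card PK) / 8" using sg(1) PK(2) by (simp add: card_gt_0_iff)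
  ultimately have "0 < card {p\<in>PK. \<sigma> p = i}" by linarith
  then have "{p\<in>PK. \<sigma> p = i} \<noteq> {}" by force
  then have "i < r" using \<sigma>(1) PK(1) by blast
  have sub: "{p\<in>PK. \<sigma> p = i} \<subseteq> K \<inter> {p\<in>P. \<sigma> p = i}" using PK(1) by blast
  moreover have "finite (K \<inter> {p\<in>P. \<sigma> p = i})" using P(1) by simp
  ultimately have "card {p\<in>PK. \<sigma> p = i} \<le> card (K \<inter> {p\<in>P. \<sigma> p = i})" by (rule card_mono[rotated])
  moreover have "1/16 * eps * sg * real r * real (card {p\<in>P. \<sigma> p = i}) \<le> sg * real (card PK) / 8"
  proof -
    have "1/16 * eps * sg * real r * real (card {p\<in>P. \<sigma> p = i})
        \<le> 1/16 * eps * sg * real r * (2 * real (card P) / real r)"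
      using strip_size eps sg(1) by (intro mult_left_mono) simp_all
    also have "\<dots> = sg * (eps * real (card P)) / 8" using r by (simp add: field_simps)
    also have "\<dots> \<le> sg * real (card PK) / 8" using PK(3) sg(1) by simp
    finally show ?thesis .
  qed
  moreover have "K \<inter> {p\<in>P. \<sigma> p = i} \<noteq> {}" using \<open>{p\<in>PK. \<sigma> p = i} \<noteq> {}\<close> sub by blast
  ultimately show ?thesis using i \<open>i < r\<close> by force
next
  case False
  then have sparse: "real (card {p\<in>PK. \<sigma> p = i}) \<le> sg * real (card PK) / 8" for i
    by (simp add: not_less)
  have "PK \<subseteq> P" using PK(1) by blast
  then obtain i where "i < r" and i: "sg * real (card PK) ^ 2 / (8 * real r)
      \<le> real (card {f\<in>crossing_pairs \<sigma> P E i. fst f \<in> PK \<and> snd f \<in> PK})"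
    using many_crossing_pairs[OF P \<sigma> _ PK(2) sg dense sparse] by blast
  have "{f\<in>crossing_pairs \<sigma> P E i. fst f \<in> PK \<and> snd f \<in> PK}
      \<subseteq> {f\<in>crossing_pairs \<sigma> P E i. fst f \<in> K \<and> snd f \<in> K}" using PK(1) by blast
  moreover have "finite {f\<in>crossing_pairs \<sigma> P E i. fst f \<in> K \<and> snd f \<in> K}"
    using finite_crossing_pairs[OF P(1)] by simp
  ultimately have "card {f\<in>crossing_pairs \<sigma> P E i. fst f \<in> PK \<and> snd f \<in> PK}
      \<le> card {f\<in>crossing_pairs \<sigma> P E i. fst f \<in> K \<and> snd f \<in> K}" by (rule card_mono[rotated])
  then show ?thesis using i \<open>i < r\<close> by force
qed

lemma strip_transversal:
  fixes P :: "pt set" and E :: "pt set set" and r :: nat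
  assumes P: "finite P" "inj_on fst P" and E: "E \<subseteq> edges P"
    and eps: "0 < eps" and sg: "0 < sg" "sg \<le> 1" and r: "1 \<le> r" "r \<le> card P"
    and Ks: "Ks \<subseteq> restricted_family P E eps sg"
  shows "\<exists>T. finite T \<and> (\<forall>K\<in>Ks. T \<inter> K \<noteq> {}) \<and>
     real (card T) \<le> real r * real (f2 (1/16 * eps * sg * real r))
       + 8 * real r ^ 2 * real (card E) / (sg * eps ^ 2 * real (card P) ^ 2)"
proof -
  define n m x s where "n = card P" and "m = nat \<lceil>eps * real n\<rceil>"
    and "x = 1/16 * eps * sg * real r" and "s = nat \<lceil>sg * real m ^ 2 / (8 * real r)\<rceil>"
  have n: "0 < real n" unfolding n_def using r by simp
  have x: "0 < x" unfolding x_def using eps sg r by simp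
  have m: "eps * real n \<le> real m" "0 < m" unfolding m_def using eps n by (linarith, simp)
  have s: "sg * real m ^ 2 / (8 * real r) \<le> real s" "0 < s" unfolding s_def using sg m r by (linarith, simp)
  obtain \<sigma> where \<sigma>: "\<forall>p\<in>P. \<sigma> p < r" "\<forall>p\<in>P. \<forall>q\<in>P. \<sigma> p < \<sigma> q \<longrightarrow> fst p < fst q"
    and strip_size: "\<And>i. real (card {p\<in>P. \<sigma> p = i}) \<le> 2 * real n / real r"
    using vertical_strips[OF P r] unfolding n_def by blast
  have strips_finite: "finite {p\<in>P. \<sigma> p = i}" for i using P(1) by simp
  obtain TA where TA: "\<And>i. finite (TA i)" "\<And>i. card (TA i) \<le> f2 x"
    "\<And>i K. convex K \<Longrightarrow> x * real (card {p\<in>P. \<sigma> p = i}) \<le> real (card (K \<inter> {p\<in>P. \<sigma> p = i}))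
       \<Longrightarrow> K \<inter> {p\<in>P. \<sigma> p = i} \<noteq> {} \<Longrightarrow> TA i \<inter> K \<noteq> {}"
    using bounded_weak_nets_family[where A = "\<lambda>i. {p\<in>P. \<sigma> p = i}",
          OF bounded_weak_nets_f2[OF x] strips_finite TrueI] by blast
  obtain TB where TB: "\<And>i. finite (TB i)" "\<And>i. card (TB i) * s \<le> card (crossing_pairs \<sigma> P E i)"
    "\<And>i K. convex K \<Longrightarrow> s \<le> card {f\<in>crossing_pairs \<sigma> P E i. fst f \<in> K \<and> snd f \<in> K} \<Longrightarrow> TB i \<inter> K \<noteq> {}"
    using crossing_pairs_transversals[OF P(1) s(2) \<sigma>(2)] by blast
  define T where "T = (\<Union>i<r. TA i) \<union> (\<Union>i<r. TB i)"
  have "finite T" unfolding T_def using TA(1) TB(1) by simp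
  moreover have "real (card T) \<le> real r * real (f2 x)
      + 8 * real r ^ 2 * real (card E) / (sg * eps ^ 2 * real n ^ 2)"
  proof -
    have A: "card (\<Union>i<r. TA i) \<le> r * f2 x" by (rule card_UN_lessThan_le) (rule TA(2))
    have "card (\<Union>i<r. TB i) * s \<le> (\<Sum>i<r. card (TB i)) * s"
      using card_UN_le[of "{..<r}" TB] by simp
    also have "\<dots> = (\<Sum>i<r. card (TB i) * s)" by (rule sum_distrib_right)
    also have "\<dots> \<le> (\<Sum>i<r. card (crossing_pairs \<sigma> P E i))" by (rule sum_mono) (rule TB(2))
    also have "\<dots> \<le> card E"
      by (rule sum_card_crossing_pairs_le[OF P(1) finite_subset[OF E finite_edges[OF P(1)]] _ \<sigma>(2)]) simp
    finally have "real (card (\<Union>i<r. TB i)) * real s \<le> real (card E)"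
      by (simp flip: of_nat_mult)
    from transversal_budget[OF this s(1) m(1) sg(1) eps n _ of_nat_0_le_iff]
    have B: "real (card (\<Union>i<r. TB i)) \<le> 8 * real r ^ 2 * real (card E) / (sg * eps ^ 2 * real n ^ 2)"
      using r(1) by simp
    have "card T \<le> card (\<Union>i<r. TA i) + card (\<Union>i<r. TB i)" unfolding T_def by (rule card_Un_le)
    then have "real (card T) \<le> real (card (\<Union>i<r. TA i)) + real (card (\<Union>i<r. TB i))" by simp
    moreover have "real (card (\<Union>i<r. TA i)) \<le> real r * real (f2 x)" using A by (simp flip: of_nat_mult)
    ultimately show ?thesis using B by linarith
  qed
  moreover have "T \<inter> K \<noteq> {}" if K: "K \<in> Ks" for K
  proof -
    obtain PK where PK: "PK \<subseteq> P \<inter> K" "card PK = m" "sg * real (m choose 2) \<le> real (card (edges PK \<inter> E))"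
      and "convex K" using K Ks unfolding restricted_family_def restricted_def m_def n_def by auto
    have "PK \<noteq> {}" using PK(2) m(2) by auto
    from dense_strip_or_crossing_edges[OF P \<sigma> _ PK(1) this _ _ eps sg r(1), where E = E]
    obtain i where "i < r" and "(x * real (card {p\<in>P. \<sigma> p = i}) \<le> real (card (K \<inter> {p\<in>P. \<sigma> p = i}))
          \<and> K \<inter> {p\<in>P. \<sigma> p = i} \<noteq> {})
        \<or> s \<le> card {f\<in>crossing_pairs \<sigma> P E i. fst f \<in> K \<and> snd f \<in> K}"
      using strip_size m(1) PK(2,3) unfolding x_def s_def n_def by (auto simp: nat_ceiling_le_eq)
    then have "TA i \<inter> K \<noteq> {} \<or> TB i \<inter> K \<noteq> {}" using TA(3) TB(3) \<open>convex K\<close> by blast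
    then show ?thesis unfolding T_def using \<open>i < r\<close> by blast
  qed
  ultimately have "\<exists>T. finite T \<and> (\<forall>K\<in>Ks. T \<inter> K \<noteq> {}) \<and> real (card T) \<le> real r * real (f2 x)
      + 8 * real r ^ 2 * real (card E) / (sg * eps ^ 2 * real n ^ 2)" by blast
  then show ?thesis unfolding x_def n_def .
qed

lemma restricted_family_transversal_small:
  assumes "finite P" "P \<noteq> {}" "0 < eps" "Ks \<subseteq> restricted_family P E eps sg"
  shows "\<exists>T. finite T \<and> (\<forall>K\<in>Ks. T \<inter> K \<noteq> {}) \<and> card T \<le> card P"
proof (intro exI[of _ P] conjI ballI)
  fix K assume "K \<in> Ks"
  then obtain PK where "PK \<subseteq> P \<inter> K" "card PK = nat \<lceil>eps * real (card P)\<rceil>"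
    using assms(4) unfolding restricted_family_def restricted_def by blast
  moreover have "0 < eps * real (card P)" using assms(1-3) by (simp add: card_gt_0_iff)
  ultimately have "PK \<noteq> {}" "PK \<subseteq> P \<inter> K" by auto
  then show "P \<inter> K \<noteq> {}" by blast
qed (use assms(1) in simp_all)

theorem mainTheorem4:
  shows "\<exists>C c::real. C > 0 \<and> c > 0 \<and>
    (\<forall>(P::pt set) E eps sg (r::nat) \<K>.
       finite P \<and> P \<noteq> {} \<and> general_position P \<and> E \<subseteq> edges P \<and>
       0 < eps \<and> eps \<le> 1 \<and> 0 < sg \<and> sg \<le> 1 \<and> r \<ge> 1 \<and>
       \<K> \<subseteq> restricted_family P E eps sg \<longrightarrow>
       (\<exists>T::pt set. finite T \<and> (\<forall>K\<in>\<K>. T \<inter> K \<noteq> {}) \<and>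
          real (card T) \<le> C * (real r * real (f2 (c * eps * sg * real r))
             + (real r ^ 2 * real (card E)) / (sg * eps ^ 2 * real (card P) ^ 2))))"
proof (rule exI[of _ 8], rule exI[of _ "1/16"], intro conjI allI impI)
  fix P :: "pt set" and E eps sg and r :: nat and Ks
  assume "finite P \<and> P \<noteq> {} \<and> general_position P \<and> E \<subseteq> edges P \<and> 0 < eps \<and> eps \<le> 1 \<and>
    0 < sg \<and> sg \<le> 1 \<and> r \<ge> 1 \<and> Ks \<subseteq> restricted_family P E eps sg"
  then have P: "finite P" "P \<noteq> {}" "general_position P" and E: "E \<subseteq> edges P"
    and eps: "0 < eps" and sg: "0 < sg" "sg \<le> 1" and r: "1 \<le> r" and Ks: "Ks \<subseteq> restricted_family P E eps sg"
    by auto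
  define f where "f = real (f2 (1/16 * eps * sg * real r))"
  define b where "b = real r ^ 2 * real (card E) / (sg * eps ^ 2 * real (card P) ^ 2)"
  have "real r \<le> real r * f" unfolding f_def using f2_ge_1[of "1/16 * eps * sg * real r"] eps sg r by simp
  moreover have "0 \<le> b" unfolding b_def using sg by simp
  moreover have "0 \<le> real r" by simp
  moreover obtain T where T: "finite T" "\<forall>K\<in>Ks. T \<inter> K \<noteq> {}" "real (card T) \<le> real r * f + 8 * b"
  proof (cases "card P \<le> r")
    case True
    then show thesis using restricted_family_transversal_small[OF P(1,2) eps Ks] that \<open>0 \<le> b\<close>
      \<open>real r \<le> real r * f\<close> by (smt (verit) le_trans of_nat_le_iff)
  next
    case False
    then show thesis using strip_transversal[OF P(1) general_position_inj_on_fst[OF P(3)] E eps sg r _ Ks] that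
      unfolding f_def b_def by (auto simp: mult.assoc)
  qed
  ultimately have "real (card T) \<le> 8 * (real r * f) + 8 * b" by linarith
  then have "real (card T) \<le> 8 * (real r * f + b)" by (simp add: distrib_left)
  then show "\<exists>T::pt set. finite T \<and> (\<forall>K\<in>Ks. T \<inter> K \<noteq> {}) \<and>
      real (card T) \<le> 8 * (real r * real (f2 (1/16 * eps * sg * real r))
        + real r ^ 2 * real (card E) / (sg * eps ^ 2 * real (card P) ^ 2))"
    using T(1,2) unfolding f_def b_def by blast
qed (simp_all)

end
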